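(* Let $\mu\in (-1,1)$ and $$\tilde{M} = \begin{pmatrix} 1 & i\mu \\ -i\mu & 1 \end{pmatrix}.$$ Then for every $k\in \mathbb{N}$, $\lambda_{\min}\big(\mathrm{Re}(\tilde{M}^{\otimes k})\big) \ge (1-\mu^2)^{k/2}$.
   Context: $\tilde M^{\otimes k}$ is the $k$-fold Kronecker (tensor) power, $\mathrm{Re}(\cdot)$ denotes the entrywise real part of a complex matrix (which here is a real symmetric matrix), and $\lambda_{\min}$ denotes the smallest eigenvalue. *)

theory Defs
  imports Complex_Main "Jordan_Normal_Form.Matrix" "Jordan_Normal_Form.Char_Poly"
begin

definition kron :: "'a::times mat \<Rightarrow> 'a mat \<Rightarrow> 'a mat" where
  "kron A B = mat (dim_row A * dim_row B) (dim_col A * dim_col B)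
     (\<lambda>(i,j). A $$ (i div dim_row B, j div dim_col B) * B $$ (i mod dim_row B, j mod dim_col B))"

fun kron_pow :: "'a::{times,zero,one} mat \<Rightarrow> nat \<Rightarrow> 'a mat" where
  "kron_pow A 0 = 1\<^sub>m 1"
| "kron_pow A (Suc k) = kron A (kron_pow A k)"

definition Re_mat :: "complex mat \<Rightarrow> real mat" where
  "Re_mat A = map_mat Re A"

definition lambda_min :: "real mat \<Rightarrow> real" where
  "lambda_min A = Min {x. eigenvalue A x}"

definition Mtilde :: "real \<Rightarrow> complex mat" where
  "Mtilde \<mu> = mat_of_rows_list 2 [[1, \<i> * complex_of_real \<mu>], [- \<i> * complex_of_real \<mu>, 1]]"

end

theory Submission
  imports Defs "Jordan_Normal_Form.Spectral_Radius"
begin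

(* Put M = Mtilde mu and L = [[1, i mu], [0, sqrt (1 - mu^2)]]. Then M = L^* L, M is Hermitian
   and M conj(M) = (1 - mu^2) I. All three identities are multiplicative under Kronecker products,
   so the Kronecker power A = M^{(x)k} is positive semidefinite and Hermitian with
   A conj(A) = conj(A) A = c I, where c = (1 - mu^2)^k. Since conj(A) is Hermitian as well,
   with s = sqrt c,
     (conj(A) - s)^* A (conj(A) - s) = c (A + conj(A) - 2 s) = 2 c (Re A - s),
   so Re A - s is positive semidefinite and every eigenvalue of the real symmetric matrix Re A
   is at least s = (1 - mu^2)^(k/2). *)

lemma sum_ivl_mult_split:
  fixes m n :: nat
  shows "(\<Sum>l\<in>{0..<m * n}. g l) = (\<Sum>a\<in>{0..<m}. \<Sum>b\<in>{0..<n}. g (a * n + b))"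
  unfolding atLeast0LessThan sum.nat_group[symmetric]
  by (simp add: atLeast0LessThan[symmetric] sum.shift_bounds_nat_ivl[symmetric] add.commute)

lemma div_mod_less_mult:
  fixes i m n :: nat
  assumes "i < m * n"
  shows "i div n < m" "i mod n < n"
  using assms less_mult_imp_div_less by (cases "n = 0"; simp)+

lemma dim_kron [simp]:
  "dim_row (kron A B) = dim_row A * dim_row B"
  "dim_col (kron A B) = dim_col A * dim_col B"
  by (simp_all add: kron_def)

lemma kron_carrier_mat [simp]:
  "kron A B \<in> carrier_mat (dim_row A * dim_row B) (dim_col A * dim_col B)"
  by (rule carrier_matI) simp_all

lemma index_kron [simp]:
  "i < dim_row A * dim_row B \<Longrightarrow> j < dim_col A * dim_col B \<Longrightarrow>
   kron A B $$ (i, j) = A $$ (i div dim_row B, j div dim_col B) * B $$ (i mod dim_row B, j mod dim_col B)"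
  by (simp add: kron_def)

lemma kron_mult:
  fixes A B C D :: "'a::comm_semiring_1 mat"
  assumes A: "A \<in> carrier_mat m n" and B: "B \<in> carrier_mat p q"
    and C: "C \<in> carrier_mat n r" and D: "D \<in> carrier_mat q s"
  shows "kron A B * kron C D = kron (A * C) (B * D)"
proof (rule eq_matI)
  fix i j
  assume "i < dim_row (kron (A * C) (B * D))" "j < dim_col (kron (A * C) (B * D))"
  with A B C D have i: "i < m * p" and j: "j < r * s" by auto
  have "(kron A B * kron C D) $$ (i, j) = (\<Sum>l\<in>{0..<n * q}. kron A B $$ (i, l) * kron C D $$ (l, j))"
    using i j A B C D by (simp add: scalar_prod_def)
  also have "\<dots> = (\<Sum>a\<in>{0..<n}. \<Sum>b\<in>{0..<q}.
      (A $$ (i div p, a) * C $$ (a, j div s)) * (B $$ (i mod p, b) * D $$ (b, j mod s)))"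
    unfolding sum_ivl_mult_split
  proof (intro sum.cong refl)
    fix a b
    assume "a \<in> {0..<n}" "b \<in> {0..<q}"
    then have "a * q + b < n * q" and "(a * q + b) div q = a" "(a * q + b) mod q = b"
      using mult_le_mono1[of "Suc a" n q] by auto
    then show "kron A B $$ (i, a * q + b) * kron C D $$ (a * q + b, j) =
        (A $$ (i div p, a) * C $$ (a, j div s)) * (B $$ (i mod p, b) * D $$ (b, j mod s))"
      using i j A B C D by (simp add: ac_simps)
  qed
  also have "\<dots> = (\<Sum>a\<in>{0..<n}. A $$ (i div p, a) * C $$ (a, j div s))
      * (\<Sum>b\<in>{0..<q}. B $$ (i mod p, b) * D $$ (b, j mod s))"
    by (simp add: sum_product)
  also have "\<dots> = kron (A * C) (B * D) $$ (i, j)"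
    using i j A B C D div_mod_less_mult[OF i] div_mod_less_mult[OF j] by (simp add: scalar_prod_def)
  finally show "(kron A B * kron C D) $$ (i, j) = kron (A * C) (B * D) $$ (i, j)" .
qed (use A B C D in simp_all)

lemma transpose_kron: "transpose_mat (kron A B) = kron (transpose_mat A) (transpose_mat B)"
  by (rule eq_matI) (auto simp: div_mod_less_mult)

lemma map_mat_kron:
  assumes "\<And>x y. f (x * y) = f x * f y"
  shows "map_mat f (kron A B) = kron (map_mat f A) (map_mat f B)"
  by (rule eq_matI) (auto simp: assms div_mod_less_mult)

lemma kron_smult_one_mat:
  "kron (a \<cdot>\<^sub>m 1\<^sub>m m) (b \<cdot>\<^sub>m 1\<^sub>m n) = ((a * b) :: 'a::comm_semiring_1) \<cdot>\<^sub>m 1\<^sub>m (m * n)"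
proof (rule eq_matI)
  fix i j
  assume "i < dim_row ((a * b) \<cdot>\<^sub>m 1\<^sub>m (m * n))" "j < dim_col ((a * b) \<cdot>\<^sub>m 1\<^sub>m (m * n))"
  then have i: "i < m * n" and j: "j < m * n" by auto
  have "i div n = j div n \<and> i mod n = j mod n \<longleftrightarrow> i = j"
    by (metis div_mult_mod_eq)
  then show "kron (a \<cdot>\<^sub>m 1\<^sub>m m) (b \<cdot>\<^sub>m 1\<^sub>m n) $$ (i, j) = ((a * b) \<cdot>\<^sub>m 1\<^sub>m (m * n)) $$ (i, j)"
    using i j div_mod_less_mult[OF i] div_mod_less_mult[OF j] by (cases "i = j") auto
qed auto

lemma kron_pow_carrier_mat:
  "A \<in> carrier_mat m n \<Longrightarrow> kron_pow A k \<in> carrier_mat (m ^ k) (n ^ k)"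
  by (induction k) auto

lemma kron_pow_mult:
  fixes A B :: "'a::comm_semiring_1 mat"
  assumes A: "A \<in> carrier_mat m n" and B: "B \<in> carrier_mat n p"
  shows "kron_pow (A * B) k = kron_pow A k * kron_pow B k"
proof (induction k)
  case (Suc k)
  then show ?case
    using kron_mult[OF A kron_pow_carrier_mat[OF A] B kron_pow_carrier_mat[OF B]] by simp
qed simp

lemma map_mat_kron_pow:
  assumes "\<And>x y. f (x * y) = f x * f y" and "f 1 = 1"
  shows "map_mat f (kron_pow A k) = kron_pow (map_mat f A) k"
  by (induction k) (auto simp: assms map_mat_kron)

lemma transpose_kron_pow: "transpose_mat (kron_pow A k) = kron_pow (transpose_mat A) k"
  by (induction k) (auto simp: transpose_kron)

lemma kron_pow_smult_one_mat:
  "kron_pow ((a :: 'a::comm_semiring_1) \<cdot>\<^sub>m 1\<^sub>m n) k = a ^ k \<cdot>\<^sub>m 1\<^sub>m (n ^ k)"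
  by (induction k) (auto simp: kron_smult_one_mat)

lemma smult_one_mat_mult_vec:
  fixes v :: "'a::comm_ring_1 vec"
  shows "v \<in> carrier_vec n \<Longrightarrow> (c \<cdot>\<^sub>m 1\<^sub>m n) *\<^sub>v v = c \<cdot>\<^sub>v v"
  by (rule eq_vecI) (auto simp: scalar_prod_def of_bool_def[symmetric] mult.assoc sum_distrib_left[symmetric])

interpretation cnj: semiring_hom cnj
  by unfold_locales auto

definition adjoint_mat :: "complex mat \<Rightarrow> complex mat" where
  "adjoint_mat A = transpose_mat (map_mat cnj A)"

lemma kron_pow_hermitian:
  "map_mat cnj A = transpose_mat A \<Longrightarrow>
   map_mat cnj (kron_pow A k) = transpose_mat (kron_pow A k)"
  by (simp add: map_mat_kron_pow transpose_kron_pow)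

lemma adjoint_kron_pow: "adjoint_mat (kron_pow A k) = kron_pow (adjoint_mat A) k"
  by (simp add: adjoint_mat_def map_mat_kron_pow transpose_kron_pow)

lemma conjugate_complex_vec: "conjugate v = map_vec cnj v"
  by (rule eq_vecI) auto

lemma conjugate_mult_mat_vec:
  fixes A :: "complex mat"
  assumes "A \<in> carrier_mat n m" and "v \<in> carrier_vec m"
  shows "conjugate (A *\<^sub>v v) = map_mat cnj A *\<^sub>v conjugate v"
  using cnj.mult_mat_vec_hom[OF assms] by (simp add: conjugate_complex_vec)

lemma adjoint_mult_self_nonneg:
  fixes L :: "complex mat"
  assumes L: "L \<in> carrier_mat m n" and u: "u \<in> carrier_vec n"
  shows "0 \<le> ((adjoint_mat L * L) *\<^sub>v u) \<bullet>c u"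
proof -
  have Lc: "map_mat cnj L \<in> carrier_mat m n" using L by simp
  have "((adjoint_mat L * L) *\<^sub>v u) \<bullet>c u = (transpose_mat (map_mat cnj L) *\<^sub>v (L *\<^sub>v u)) \<bullet> conjugate u"
    using L u by (simp add: adjoint_mat_def)
  also have "\<dots> = (L *\<^sub>v u) \<bullet> (map_mat cnj L *\<^sub>v conjugate u)"
    using transpose_vec_mult_scalar[OF Lc, of "conjugate u" "L *\<^sub>v u"] L u by simp
  also have "\<dots> = (L *\<^sub>v u) \<bullet>c (L *\<^sub>v u)"
    by (simp add: conjugate_mult_mat_vec[OF L u])
  finally show ?thesis by (simp add: conjugate_square_ge_0_vec)
qed

lemma hermitian_eigenvalue_real:
  fixes A :: "complex mat"
  assumes A: "A \<in> carrier_mat n n" and herm: "map_mat cnj A = transpose_mat A"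
    and "eigenvalue A z"
  shows "z \<in> \<real>"
proof -
  obtain w where w: "w \<in> carrier_vec n" "w \<noteq> 0\<^sub>v n" and Aw: "A *\<^sub>v w = z \<cdot>\<^sub>v w"
    using assms unfolding eigenvalue_def eigenvector_def by auto
  have Aw_carrier: "A *\<^sub>v w \<in> carrier_vec n" using A w by simp
  have "cnj ((A *\<^sub>v w) \<bullet>c w) = conjugate (A *\<^sub>v w) \<bullet> w"
    using conjugate_sprod_vec[OF Aw_carrier, of "conjugate w"] w by simp
  also have "\<dots> = (transpose_mat A *\<^sub>v conjugate w) \<bullet> w"
    by (simp add: conjugate_mult_mat_vec[OF A w(1)] herm)
  also have "\<dots> = (A *\<^sub>v w) \<bullet>c w"
    using transpose_vec_mult_scalar[OF A w(1), of "conjugate w"] conjugate_vec_sprod_comm[OF Aw_carrier w(1)]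
    by (simp add: w(1))
  finally have form_real: "cnj ((A *\<^sub>v w) \<bullet>c w) = (A *\<^sub>v w) \<bullet>c w" .
  have "(A *\<^sub>v w) \<bullet>c w = z * (w \<bullet>c w)" using Aw w by simp
  moreover have "0 < w \<bullet>c w" using w by simp
  then have "cnj (w \<bullet>c w) = w \<bullet>c w" "w \<bullet>c w \<noteq> 0"
    by (auto simp: less_complex_def complex_eq_iff)
  ultimately have "cnj z = z" using form_real by simp
  then show ?thesis using Reals_cnj_iff by blast
qed

lemma real_symmetric_eigenvalue_exists:
  fixes R :: "real mat"
  assumes R: "R \<in> carrier_mat n n" and n: "0 < n" and sym: "transpose_mat R = R"
  shows "\<exists>x. eigenvalue R x"
proof -
  let ?C = "map_mat complex_of_real R"
  have C: "?C \<in> carrier_mat n n" using R by simp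
  obtain z where z: "eigenvalue ?C z" using spectrum_non_empty[OF C n] unfolding spectrum_def by auto
  have "R $$ (j, i) = R $$ (i, j)" if "i < n" "j < n" for i j
    using that R by (metis sym index_transpose_mat(1) carrier_matD)
  then have "map_mat cnj ?C = transpose_mat ?C"
    using R by (intro eq_matI) auto
  then have "z \<in> \<real>" using hermitian_eigenvalue_real[OF C _ z] by simp
  then obtain x where "z = complex_of_real x" by (auto elim: Reals_cases)
  then have "complex_of_real (poly (char_poly R) x) = 0"
    using z eigenvalue_root_char_poly[OF C]
    by (simp add: of_real_hom.char_poly_hom[OF R])
  then show ?thesis using eigenvalue_root_char_poly[OF R] by auto
qed

lemma Re_mat_hermitian_symmetric:
  assumes "map_mat cnj A = transpose_mat A"
  shows "transpose_mat (Re_mat A) = Re_mat A"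
proof -
  have "transpose_mat (Re_mat A) = map_mat Re (map_mat cnj A)"
    by (simp add: Re_mat_def map_mat_transpose assms)
  also have "\<dots> = Re_mat A"
    by (rule eq_matI) (auto simp: Re_mat_def)
  finally show ?thesis .
qed

lemma scaled_unitary_commute:
  fixes A :: "complex mat"
  assumes A: "A \<in> carrier_mat n n"
    and scaled_unitary: "A * map_mat cnj A = complex_of_real c \<cdot>\<^sub>m 1\<^sub>m n"
  shows "map_mat cnj A * A = complex_of_real c \<cdot>\<^sub>m 1\<^sub>m n"
proof -
  have "map_mat cnj (map_mat cnj A) = A"
    by (rule eq_matI) auto
  then have "map_mat cnj A * A = map_mat cnj (A * map_mat cnj A)"
    using cnj.mat_hom_mult[OF A, of "map_mat cnj A" n] A by simp
  also have "\<dots> = complex_of_real c \<cdot>\<^sub>m 1\<^sub>m n"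
    unfolding scaled_unitary by (rule eq_matI) auto
  finally show ?thesis .
qed

lemma hermitian_scaled_unitary_form:
  fixes A :: "complex mat" and w :: "complex vec" and c t :: real
  assumes A: "A \<in> carrier_mat n n"
    and herm: "map_mat cnj A = transpose_mat A"
    and scaled_unitary: "A * map_mat cnj A = complex_of_real c \<cdot>\<^sub>m 1\<^sub>m n"
    and w: "w \<in> carrier_vec n" and real_w: "conjugate w = w"
    and t: "t * t = c"
  defines "u \<equiv> conjugate (A *\<^sub>v w) - complex_of_real t \<cdot>\<^sub>v w"
  shows "(A *\<^sub>v u) \<bullet>c u = 2 * complex_of_real c * (w \<bullet> (A *\<^sub>v w) - complex_of_real t * (w \<bullet> w))"
proof -
  define a where "a = A *\<^sub>v w"
  define s where "s = complex_of_real t"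
  have a: "a \<in> carrier_vec n" using A w by (simp add: a_def)
  have ss: "s * s = complex_of_real c"
    by (simp add: s_def t flip: of_real_mult)
  have conj_a: "conjugate a = map_mat cnj A *\<^sub>v w"
    using conjugate_mult_mat_vec[OF A w] real_w by (simp add: a_def)
  have A_conj_a: "A *\<^sub>v conjugate a = complex_of_real c \<cdot>\<^sub>v w"
    using A w by (simp add: conj_a flip: assoc_mult_mat_vec) (simp add: scaled_unitary smult_one_mat_mult_vec)
  have aa: "a \<bullet> a = complex_of_real c * (w \<bullet> w)"
  proof -
    have "a \<bullet> a = w \<bullet> (transpose_mat A *\<^sub>v a)"
      using transpose_vec_mult_scalar[of "transpose_mat A" n n a w] A w a by (simp add: a_def)
    also have "transpose_mat A *\<^sub>v a = complex_of_real c \<cdot>\<^sub>v w"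
      using A w scaled_unitary_commute[OF A scaled_unitary]
      by (simp add: a_def herm[symmetric] flip: assoc_mult_mat_vec) (simp add: smult_one_mat_mult_vec)
    finally show ?thesis using w by simp
  qed
  have "cnj (w $ i) = w $ i" if "i < n" for i
    using arg_cong[OF real_w, of "\<lambda>v. v $ i"] that w by simp
  then have conj_u: "conjugate u = a - s \<cdot>\<^sub>v w"
    using a w by (intro eq_vecI) (auto simp: u_def s_def simp flip: a_def)
  have "A *\<^sub>v u = complex_of_real c \<cdot>\<^sub>v w - s \<cdot>\<^sub>v a"
    using A a w by (simp add: u_def s_def mult_minus_distrib_mat_vec A_conj_a mult_mat_vec a_def[symmetric])
  then have "(A *\<^sub>v u) \<bullet>c u = (complex_of_real c \<cdot>\<^sub>v w - s \<cdot>\<^sub>v a) \<bullet> (a - s \<cdot>\<^sub>v w)"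
    by (simp only: conj_u)
  also have "\<dots> = 2 * complex_of_real c * (w \<bullet> a - s * (w \<bullet> w))"
    using a w by (simp add: minus_scalar_prod_distrib[of _ n] scalar_prod_minus_distrib[of _ n]
        comm_scalar_prod[of a n w] aa algebra_simps ss)
  finally show ?thesis by (simp add: a_def s_def)
qed

lemma Re_mat_eigenvalue_ge_sqrt:
  fixes A :: "complex mat"
  assumes A: "A \<in> carrier_mat n n"
    and herm: "map_mat cnj A = transpose_mat A"
    and scaled_unitary: "A * map_mat cnj A = complex_of_real c \<cdot>\<^sub>m 1\<^sub>m n"
    and psd: "\<And>u. u \<in> carrier_vec n \<Longrightarrow> 0 \<le> (A *\<^sub>v u) \<bullet>c u"
    and c: "0 < c"
    and x: "eigenvalue (Re_mat A) x"
  shows "sqrt c \<le> x"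
proof -
  obtain v where v: "v \<in> carrier_vec n" "v \<noteq> 0\<^sub>v n" and Rv: "map_mat Re A *\<^sub>v v = x \<cdot>\<^sub>v v"
    using x A unfolding eigenvalue_def eigenvector_def Re_mat_def by auto
  define w where "w = map_vec complex_of_real v"
  define u where "u = conjugate (A *\<^sub>v w) - complex_of_real (sqrt c) \<cdot>\<^sub>v w"
  have w: "w \<in> carrier_vec n" and real_w: "conjugate w = w"
    using v by (auto simp: w_def)
  have "Re (w \<bullet> (A *\<^sub>v w)) = v \<bullet> (map_mat Re A *\<^sub>v v)"
    using A v by (simp add: w_def scalar_prod_def sum_distrib_left mult.assoc)
  also have "\<dots> = x * (v \<bullet> v)"
    using v by (simp add: Rv)
  finally have "Re (w \<bullet> (A *\<^sub>v w)) = x * (v \<bullet> v)" .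
  moreover have "w \<bullet> w = complex_of_real (v \<bullet> v)"
    using v by (simp add: w_def scalar_prod_def)
  moreover have "0 \<le> Re ((A *\<^sub>v u) \<bullet>c u)"
    using psd[of u] A w by (simp add: u_def less_eq_complex_def)
  ultimately have "0 \<le> 2 * c * ((x - sqrt c) * (v \<bullet> v))"
    using hermitian_scaled_unitary_form[OF A herm scaled_unitary w real_w, of "sqrt c"] c
    by (simp add: u_def algebra_simps)
  moreover have "0 < v \<bullet> v"
    using conjugate_square_greater_0_vec[OF v(1)] v(2) by simp
  ultimately show ?thesis
    using c by (simp add: zero_le_mult_iff)
qed

lemma lambda_min_ge:
  fixes R :: "real mat"
  assumes R: "R \<in> carrier_mat n n" and n: "0 < n" and sym: "transpose_mat R = R"
    and bound: "\<And>x. eigenvalue R x \<Longrightarrow> b \<le> x"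
  shows "b \<le> lambda_min R"
proof -
  have "finite {x. eigenvalue R x}" "{x. eigenvalue R x} \<noteq> {}"
    using card_finite_spectrum(1)[OF R] real_symmetric_eigenvalue_exists[OF R n sym]
    by (auto simp: spectrum_def)
  then show ?thesis
    using bound by (simp add: lambda_min_def)
qed

definition Mtilde_chol :: "real \<Rightarrow> complex mat" where
  "Mtilde_chol \<mu> = mat_of_rows_list 2 [[1, \<i> * complex_of_real \<mu>], [0, complex_of_real (sqrt (1 - \<mu>\<^sup>2))]]"

lemma Mtilde_carrier_mat: "Mtilde \<mu> \<in> carrier_mat 2 2"
  by (simp add: Mtilde_def mat_of_rows_list_def numeral_2_eq_2)

lemma Mtilde_chol_carrier_mat: "Mtilde_chol \<mu> \<in> carrier_mat 2 2"
  by (simp add: Mtilde_chol_def mat_of_rows_list_def numeral_2_eq_2)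

lemma Mtilde_hermitian: "map_mat cnj (Mtilde \<mu>) = transpose_mat (Mtilde \<mu>)"
  by (rule eq_matI) (auto simp: Mtilde_def mat_of_rows_list_def less_Suc_eq numeral_2_eq_2)

lemma Mtilde_mult_cnj: "Mtilde \<mu> * map_mat cnj (Mtilde \<mu>) = complex_of_real (1 - \<mu>\<^sup>2) \<cdot>\<^sub>m 1\<^sub>m 2"
  by (rule eq_matI) (auto simp: Mtilde_def mat_of_rows_list_def less_Suc_eq scalar_prod_def
      numeral_2_eq_2 complex_eq_iff power2_eq_square)

lemma Mtilde_eq_adjoint_mult_chol:
  assumes "\<bar>\<mu>\<bar> \<le> 1"
  shows "Mtilde \<mu> = adjoint_mat (Mtilde_chol \<mu>) * Mtilde_chol \<mu>"
proof -
  have "sqrt (1 - \<mu>\<^sup>2) * sqrt (1 - \<mu>\<^sup>2) = 1 - \<mu>\<^sup>2"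
    using assms by (simp add: abs_square_le_1)
  then show ?thesis
    by (intro eq_matI) (auto simp: Mtilde_def Mtilde_chol_def adjoint_mat_def mat_of_rows_list_def
        less_Suc_eq scalar_prod_def numeral_2_eq_2 complex_eq_iff power2_eq_square)
qed

lemma kron_pow_Mtilde_mult_cnj:
  "kron_pow (Mtilde \<mu>) k * map_mat cnj (kron_pow (Mtilde \<mu>) k)
     = complex_of_real ((1 - \<mu>\<^sup>2) ^ k) \<cdot>\<^sub>m 1\<^sub>m (2 ^ k)"
proof -
  have "kron_pow (Mtilde \<mu>) k * map_mat cnj (kron_pow (Mtilde \<mu>) k)
      = kron_pow (Mtilde \<mu> * map_mat cnj (Mtilde \<mu>)) k"
    using Mtilde_carrier_mat[of \<mu>] by (simp add: map_mat_kron_pow kron_pow_mult[of _ 2 2 _ 2])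
  then show ?thesis
    by (simp add: Mtilde_mult_cnj kron_pow_smult_one_mat)
qed

lemma kron_pow_Mtilde_nonneg:
  assumes "\<bar>\<mu>\<bar> \<le> 1" and "u \<in> carrier_vec (2 ^ k)"
  shows "0 \<le> (kron_pow (Mtilde \<mu>) k *\<^sub>v u) \<bullet>c u"
proof -
  let ?L = "kron_pow (Mtilde_chol \<mu>) k"
  have "kron_pow (Mtilde \<mu>) k = adjoint_mat ?L * ?L"
    unfolding Mtilde_eq_adjoint_mult_chol[OF assms(1)] adjoint_kron_pow
    by (rule kron_pow_mult) (auto simp: adjoint_mat_def Mtilde_chol_carrier_mat)
  then show ?thesis
    using adjoint_mult_self_nonneg[OF kron_pow_carrier_mat[OF Mtilde_chol_carrier_mat] assms(2)] by simp
qed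

theorem mainTheorem6:
  fixes \<mu> :: real and k :: nat
  assumes "-1 < \<mu>" and "\<mu> < 1"
  shows "lambda_min (Re_mat (kron_pow (Mtilde \<mu>) k)) \<ge> (1 - \<mu>\<^sup>2) powr (real k / 2)"
proof -
  define A where "A = kron_pow (Mtilde \<mu>) k"
  define c where "c = (1 - \<mu>\<^sup>2) ^ k"
  have \<mu>: "\<bar>\<mu>\<bar> \<le> 1" "0 < 1 - \<mu>\<^sup>2"
    using assms by (auto simp: abs_square_less_1)
  have A: "A \<in> carrier_mat (2 ^ k) (2 ^ k)"
    unfolding A_def by (rule kron_pow_carrier_mat[OF Mtilde_carrier_mat])
  have herm: "map_mat cnj A = transpose_mat A"
    unfolding A_def by (rule kron_pow_hermitian[OF Mtilde_hermitian])
  have "sqrt c \<le> x" if "eigenvalue (Re_mat A) x" for x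
    using Re_mat_eigenvalue_ge_sqrt[OF A herm _ _ _ that] \<mu>
    by (simp add: A_def c_def kron_pow_Mtilde_mult_cnj kron_pow_Mtilde_nonneg)
  then have "sqrt c \<le> lambda_min (Re_mat A)"
    using A Re_mat_hermitian_symmetric[OF herm] by (intro lambda_min_ge[of _ "2 ^ k"]) (auto simp: Re_mat_def)
  moreover have "sqrt c = (1 - \<mu>\<^sup>2) powr (real k / 2)"
    using \<mu>(2) by (simp add: c_def powr_half_sqrt[symmetric] powr_realpow[symmetric] powr_powr)
  ultimately show ?thesis
    unfolding A_def by simp
qed

end
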